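(* Let $k_+,k_-,t$ be integers with $0\leq k_-\leq k_+$, $k_++k_-\geq 1$ and $t>0$, and let $M\triangleq [-k_-,k_+]^*$. Let $\overline{\psi}(x)$ be the largest prime not larger than $x$, and let $p\triangleq\overline{\psi}(k_++k_-+1)$. Then for any integer $m>0$ there exists $S\subseteq (\mathbb{Z}_{p^m})^t$ with $|S|=t\cdot\frac{p^m-1}{p-1}$ such that $(\mathbb{Z}_{p^m})^t\leq M \diamond_t S$, and thereby a lattice covering of $\mathbb{Z}^n$, $n=|S|$, by $\mathcal{B}(n,t,k_+,k_-)$ with density \[\delta = \frac{ \sum_{i=0}^{t} \binom{n}{i} (k_++k_-)^i }{ ( n(p-1)/t+1 )^t }=\frac{(t(k_++k_-))^t}{t!(p-1)^t}+o(1),\] where $o(1)$ refers to $m\to\infty$ (equivalently $n\to\infty$) with $t,k_\pm$ fixed.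
   Context: $[a,b]^*=\{a,a+1,\dots,b\}\setminus\{0\}$. For a finite Abelian group $G$, a finite set $M\subseteq\mathbb{Z}\setminus\{0\}$ and $S=\{s_1,\dots,s_n\}\subseteq G$, we write $G\le M\diamond_t S$ if for every $g\in G$ there is $\mathbf{e}\in(M\cup\{0\})^n$ of Hamming weight at most $t$ with $g=\sum_i e_is_i$. $\mathcal{B}(n,t,k_+,k_-)=\{\mathbf{x}\in\mathbb{Z}^n : -k_-\le x_i\le k_+ \text{ for all } i,\ \mathrm{wt}(\mathbf{x})\le t\}$ ($\mathrm{wt}$ = Hamming weight). A lattice covering of $\mathbb{Z}^n$ by $\mathcal{B}$ is a lattice $\Lambda\subseteq\mathbb{Z}^n$ with $\bigcup_{\mathbf{v}\in\Lambda}(\mathbf{v}+\mathcal{B})=\mathbb{Z}^n$; its density is $|\mathcal{B}|/\mathrm{vol}(\Lambda)$, $\mathrm{vol}(\Lambda)=|\mathbb{Z}^n/\Lambda|$. *)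

theory Defs
  imports "HOL-Analysis.Analysis" "HOL-Computational_Algebra.Primes"
begin

definition psi_bar :: "nat \<Rightarrow> nat" where
  "psi_bar x = (GREATEST q. prime q \<and> q \<le> x)"

definition int_range_star :: "int \<Rightarrow> int \<Rightarrow> int set" where
  "int_range_star a b = {a..b} - {0}"

text \<open>The group (Z_q)^t, elements as functions nat => int with coordinates
  i < t in {0..<q} and all other coordinates 0; addition is componentwise mod q.\<close>
definition Zq_vecs :: "int \<Rightarrow> nat \<Rightarrow> (nat \<Rightarrow> int) set" where
  "Zq_vecs q t = {g. (\<forall>i<t. 0 \<le> g i \<and> g i < q) \<and> (\<forall>i\<ge>t. g i = 0)}"

text \<open>(Z_q)^t \<le> M \<diamond>_w S: every group element is a combination
  sum_s e_s s (computed mod q) with coefficients in M \<union> {0} and Hamming weight at most w.\<close>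
definition group_covered :: "int \<Rightarrow> nat \<Rightarrow> int set \<Rightarrow> nat \<Rightarrow> (nat \<Rightarrow> int) set \<Rightarrow> bool" where
  "group_covered q t M w S \<longleftrightarrow>
     S \<subseteq> Zq_vecs q t \<and>
     (\<forall>g\<in>Zq_vecs q t. \<exists>e :: (nat \<Rightarrow> int) \<Rightarrow> int.
        (\<forall>s\<in>S. e s \<in> M \<union> {0}) \<and> card {s\<in>S. e s \<noteq> 0} \<le> w \<and>
        (\<forall>i<t. g i = (\<Sum>s\<in>S. e s * s i) mod q))"

definition Zn :: "nat \<Rightarrow> (nat \<Rightarrow> int) set" where
  "Zn n = {x. \<forall>i\<ge>n. x i = 0}"

definition hweight :: "nat \<Rightarrow> (nat \<Rightarrow> int) \<Rightarrow> nat" where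
  "hweight n x = card {i. i < n \<and> x i \<noteq> 0}"

definition err_ball :: "nat \<Rightarrow> nat \<Rightarrow> nat \<Rightarrow> nat \<Rightarrow> (nat \<Rightarrow> int) set" where
  "err_ball n t kp km = {x \<in> Zn n. (\<forall>i<n. - int km \<le> x i \<and> x i \<le> int kp) \<and> hweight n x \<le> t}"

definition int_lattice :: "nat \<Rightarrow> (nat \<Rightarrow> int) set \<Rightarrow> bool" where
  "int_lattice n L \<longleftrightarrow> L \<subseteq> Zn n \<and> (\<lambda>i. 0) \<in> L \<and>
     (\<forall>u\<in>L. \<forall>v\<in>L. (\<lambda>i. u i + v i) \<in> L) \<and> (\<forall>u\<in>L. (\<lambda>i. - u i) \<in> L)"

definition lattice_vol :: "nat \<Rightarrow> (nat \<Rightarrow> int) set \<Rightarrow> nat" where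
  "lattice_vol n L = card ((\<lambda>x. (\<lambda>v. (\<lambda>i. x i + v i)) ` L) ` Zn n)"

definition lattice_covering :: "nat \<Rightarrow> (nat \<Rightarrow> int) set \<Rightarrow> (nat \<Rightarrow> int) set \<Rightarrow> bool" where
  "lattice_covering n L B \<longleftrightarrow> int_lattice n L \<and>
     (\<Union>v\<in>L. (\<lambda>b. (\<lambda>i. v i + b i)) ` B) = Zn n"

definition covering_density :: "nat \<Rightarrow> (nat \<Rightarrow> int) set \<Rightarrow> (nat \<Rightarrow> int) set \<Rightarrow> real" where
  "covering_density n L B = real (card B) / real (lattice_vol n L)"

end

theory Submission
  imports Defs "HOL-Number_Theory.Cong" "HOL-Real_Asymp.Real_Asymp"
begin

text \<open>Every nonzero residue modulo \<open>p\<^sup>m\<close> is \<open>p\<^sup>j\<close> times a unit, and every unit is a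
  residue \<open>r \<in> {1, ..., p - 1}\<close> times a principal unit \<open>1 + p z\<close>. Because \<open>p \<le> k\<^sub>+ + k\<^sub>- + 1\<close>,
  the set \<open>M\<close> contains a representative of every such \<open>r\<close>, so every nonzero residue is \<open>e s\<close>
  with \<open>e \<in> M\<close> and \<open>s\<close> from the set \<open>T\<close> of the \<open>(p\<^sup>m - 1)/(p - 1)\<close> residues \<open>p\<^sup>j (1 + p z)\<close>.
  A copy of \<open>T\<close> on each of the \<open>t\<close> coordinate axes of \<open>(\<int>/p\<^sup>m)\<^sup>t\<close> therefore covers the group
  with weight \<open>t\<close>. The kernel of the syndrome map \<open>\<int>\<^sup>n \<rightarrow> (\<int>/p\<^sup>m)\<^sup>t\<close>, \<open>x \<mapsto> \<Sum> x\<^sub>j s\<^sub>j\<close>, is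
  a lattice of index \<open>p\<^bsup>mt\<^esup>\<close> whose translates of the error ball cover \<open>\<int>\<^sup>n\<close>, and
  \<open>n (p - 1)/t + 1 = p\<^sup>m\<close>. In the density only the term \<open>C(n, t) (k\<^sub>+ + k\<^sub>-)\<^sup>t\<close> survives
  as \<open>n \<rightarrow> \<infinity>\<close>.\<close>

section \<open>Representatives of nonzero residues modulo prime powers\<close>

text \<open>The residues \<open>p\<^sup>j (1 + p z)\<close> modulo \<open>p\<^sup>m\<close>, i.e. those whose \<open>p\<close>-free part is a principal unit.\<close>

fun principal_reps :: "int \<Rightarrow> nat \<Rightarrow> int set" where
  "principal_reps p 0 = {}"
| "principal_reps p (Suc m) = (\<lambda>z. 1 + p * z) ` {0..<p ^ m} \<union> (*) p ` principal_reps p m"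

lemma principal_reps_subset:
  assumes "p \<ge> 2"
  shows "principal_reps p m \<subseteq> {1..<p ^ m}"
proof (induction m)
  case (Suc m)
  have "1 + p * z < p ^ Suc m" if "z < p ^ m" for z
    using mult_left_mono[of z "p ^ m - 1" p] that assms by (simp add: algebra_simps)
  moreover have "1 \<le> p * x \<and> p * x < p ^ Suc m" if "x \<in> principal_reps p m" for x
  proof -
    have "1 \<le> x" "x < p ^ m" using Suc that by auto
    then show ?thesis using assms by (simp add: mult_less_cancel_left) (smt (verit) mult_le_cancel_left1)
  qed
  ultimately show ?case using assms by auto
qed simp

lemma card_principal_reps:
  assumes "p \<ge> 2"
  shows "card (principal_reps p m) = (\<Sum>i<m. nat p ^ i)"
proof (induction m)
  case (Suc m)
  have "finite (principal_reps p m)"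
    using principal_reps_subset[OF assms] by (rule finite_subset) simp
  moreover have "1 + p * z \<noteq> p * x" for z x
  proof
    assume "1 + p * z = p * x"
    then have "p dvd 1 + p * z" by simp
    then have "p dvd 1" by (simp add: dvd_add_left_iff)
    then show False using assms zdvd_imp_le[of p 1] by simp
  qed
  moreover have "card ((\<lambda>z. 1 + p * z) ` {0..<p ^ m}) = nat p ^ m"
    using assms by (subst card_image) (auto simp: inj_on_def nat_power_eq)
  moreover have "card ((*) p ` principal_reps p m) = card (principal_reps p m)"
    using assms by (subst card_image) (auto simp: inj_on_def)
  ultimately show ?case
    using Suc by (subst principal_reps.simps, subst card_Un_disjoint) auto
qed simp

lemma unit_eq_mult_principal_unit:
  fixes p e g :: int
  assumes "prime p" and "[e = g] (mod p)" and "\<not> p dvd g" and "0 \<le> g" "g < p ^ Suc m"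
  shows "\<exists>z\<in>{0..<p ^ m}. g = e * (1 + p * z) mod p ^ Suc m"
proof -
  have p2: "p \<ge> 2" using assms(1) prime_ge_2_int by blast
  have "\<not> p dvd e" using assms(2,3) cong_dvd_iff by blast
  then have "coprime e p"
    using assms(1) prime_imp_coprime coprime_commute by blast
  then have "coprime e (p ^ Suc m)" by simp
  then obtain u where u: "[e * u = 1] (mod p ^ Suc m)"
    using cong_solve_coprime_int by blast
  \<comment> \<open>\<open>s = g / e\<close>, which is \<open>1\<close> modulo \<open>p\<close> since \<open>e \<equiv> g\<close>\<close>
  define s where "s = u * g mod p ^ Suc m"
  have "[e * s = 1 * g] (mod p ^ Suc m)"
    unfolding s_def using cong_scalar_right[OF u, of g]
    by (simp add: cong_def mod_mult_right_eq mult.assoc)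
  then have es: "g = e * s mod p ^ Suc m"
    using assms(4,5) unfolding cong_def by simp
  have "[e * s = g] (mod p)"
    using cong_dvd_modulus[OF \<open>[e * s = 1 * g] (mod p ^ Suc m)\<close>, of p] by simp
  then have "[e * s = e * 1] (mod p)"
    using cong_trans[OF _ cong_sym[OF assms(2)]] by simp
  then have "[s = 1] (mod p)"
    using \<open>coprime e p\<close> cong_mult_lcancel by blast
  then have "s mod p = 1"
    using p2 unfolding cong_def by simp
  then have sp: "s = 1 + p * (s div p)"
    by (metis add.commute mult_div_mod_eq)
  have "0 \<le> s" "s < p * p ^ m" using p2 unfolding s_def by simp_all
  then have "0 \<le> s div p" "p * (s div p) < p * p ^ m"
    using sp p2 by (simp add: pos_imp_zdiv_nonneg_iff, linarith)
  then have "s div p \<in> {0..<p ^ m}" using p2 by simp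
  then show ?thesis using es sp by (metis (no_types))
qed

lemma nonzero_residue_eq_mult_principal_rep:
  fixes p :: int and E :: "int set"
  assumes "prime p" and E: "\<And>r. \<not> p dvd r \<Longrightarrow> \<exists>e\<in>E. [e = r] (mod p)"
  shows "g \<in> {1..<p ^ m} \<Longrightarrow> \<exists>e\<in>E. \<exists>s\<in>principal_reps p m. g = e * s mod p ^ m"
proof (induction m arbitrary: g)
  case (Suc m)
  have p2: "p \<ge> 2" using assms(1) prime_ge_2_int by blast
  show ?case
  proof (cases "p dvd g")
    case True
    then obtain g' where g': "g = p * g'" by blast
    have "0 < p * g'" "p * g' < p * p ^ m" using Suc.prems g' by auto
    then have "g' \<in> {1..<p ^ m}" using p2 by (simp add: zero_less_mult_iff)
    then obtain e s where "e \<in> E" "s \<in> principal_reps p m" "g' = e * s mod p ^ m"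
      using Suc.IH by blast
    moreover have "g = e * (p * s) mod p ^ Suc m"
    proof -
      have "g = p * (e * s mod p ^ m)" using g' \<open>g' = e * s mod p ^ m\<close> by simp
      also have "\<dots> = p * (e * s) mod (p * p ^ m)" by (rule mult_mod_right)
      finally show ?thesis by (simp add: mult.left_commute)
    qed
    moreover have "p * s \<in> principal_reps p (Suc m)" using \<open>s \<in> principal_reps p m\<close> by auto
    ultimately show ?thesis by blast
  next
    case False
    then obtain e where "e \<in> E" "[e = g] (mod p)" using E by blast
    moreover obtain z where "z \<in> {0..<p ^ m}" "g = e * (1 + p * z) mod p ^ Suc m"
      using unit_eq_mult_principal_unit[OF assms(1) \<open>[e = g] (mod p)\<close> False, of m] Suc.prems by auto
    moreover have "1 + p * z \<in> principal_reps p (Suc m)" using \<open>z \<in> {0..<p ^ m}\<close> by auto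
    ultimately show ?thesis by blast
  qed
qed simp

lemma int_range_star_represents_units:
  fixes p r :: int and kp km :: nat
  assumes "prime p" and "p \<le> int kp + int km + 1" and "\<not> p dvd r"
  shows "\<exists>e\<in>int_range_star (- int km) (int kp). [e = r] (mod p)"
proof -
  have p2: "p \<ge> 2" using assms(1) prime_ge_2_int by blast
  define r' where "r' = r mod p"
  have "r' \<noteq> 0" "0 \<le> r'" "r' < p"
    using assms(3) p2 unfolding r'_def by (auto simp: dvd_eq_mod_eq_0)
  moreover have "[r' = r] (mod p)" "[r' - p = r] (mod p)"
    unfolding r'_def cong_def by simp_all
  ultimately show ?thesis
    using assms(2) unfolding int_range_star_def
    by (cases "r' \<le> int kp") (auto intro: bexI[of _ r'] bexI[of _ "r' - p"])
qed

section \<open>Coverings of \<open>(\<int>\<^sub>q)\<^sup>t\<close> by axis vectors\<close>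

definition axis_vec :: "nat \<Rightarrow> int \<Rightarrow> nat \<Rightarrow> int" where
  "axis_vec c s = (\<lambda>i. if i = c then s else 0)"

definition axis_vecs :: "nat \<Rightarrow> int set \<Rightarrow> (nat \<Rightarrow> int) set" where
  "axis_vecs t T = case_prod axis_vec ` ({..<t} \<times> T)"

lemma axis_vec_eq_iff:
  "s \<noteq> 0 \<Longrightarrow> axis_vec c s = axis_vec c' s' \<longleftrightarrow> c = c' \<and> s = s'"
proof
  assume "s \<noteq> 0" and eq: "axis_vec c s = axis_vec c' s'"
  from fun_cong[OF eq, of c] have "(if c = c' then s' else 0) = s" by (simp add: axis_vec_def)
  then show "c = c' \<and> s = s'"
    using \<open>s \<noteq> 0\<close> by (simp split: if_splits)
qed simp

lemma card_axis_vecs: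
  assumes "finite T" and "0 \<notin> T"
  shows "card (axis_vecs t T) = t * card T"
proof -
  have "inj_on (case_prod axis_vec) ({..<t} \<times> T)"
    using assms(2) by (auto simp: inj_on_def) (metis axis_vec_eq_iff)+
  then show ?thesis
    unfolding axis_vecs_def using assms(1) by (simp add: card_image card_cartesian_product)
qed

lemma axis_vecs_combination:
  assumes "finite T" and "0 \<notin> T" and sc: "\<And>j. j < t \<Longrightarrow> sc j \<in> T"
  obtains e where "\<And>v. e v \<in> ec ` {..<t} \<union> {0}"
    and "card {v \<in> axis_vecs t T. e v \<noteq> 0} \<le> t"
    and "\<And>i. i < t \<Longrightarrow> (\<Sum>v\<in>axis_vecs t T. e v * v i) = ec i * sc i"
proof -
  define S where "S = axis_vecs t T"
  define u where "u j = axis_vec j (sc j)" for j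
  define e where "e v = (if v \<in> u ` {..<t} then ec (the_inv_into {..<t} u v) else 0)" for v
  have "finite S" unfolding S_def axis_vecs_def using assms(1) by simp
  have "sc j \<noteq> 0" if "j < t" for j
    using sc[OF that] assms(2) by auto
  then have inj: "inj_on u {..<t}"
    unfolding inj_on_def u_def using axis_vec_eq_iff by blast
  have uS: "u ` {..<t} \<subseteq> S"
    using sc unfolding S_def axis_vecs_def u_def by auto
  have e_u: "e (u j) = ec j" if "j < t" for j
    using that inj unfolding e_def by (simp add: the_inv_into_f_f)
  have "e v \<in> ec ` {..<t} \<union> {0}" for v
    using e_u by (cases "v \<in> u ` {..<t}") (auto simp: e_def)
  moreover have "card {v \<in> S. e v \<noteq> 0} \<le> t"
  proof -
    have "card {v \<in> S. e v \<noteq> 0} \<le> card (u ` {..<t})"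
      by (rule card_mono) (auto simp: e_def)
    also have "\<dots> \<le> t" using card_image_le[of "{..<t}" u] by simp
    finally show ?thesis .
  qed
  moreover have "(\<Sum>v\<in>S. e v * v i) = ec i * sc i" if "i < t" for i
  proof -
    have "(\<Sum>v\<in>S. e v * v i) = (\<Sum>v\<in>u ` {..<t}. e v * v i)"
      using uS \<open>finite S\<close> by (intro sum.mono_neutral_right) (auto simp: e_def)
    also have "\<dots> = (\<Sum>j<t. ec j * u j i)"
      using inj by (simp add: sum.reindex e_u)
    also have "\<dots> = ec i * sc i"
      using that by (simp add: u_def axis_vec_def if_distrib cong: if_cong)
    finally show ?thesis .
  qed
  ultimately show ?thesis using that unfolding S_def by blast
qed

lemma group_covered_axis_vecs:
  fixes q :: int
  assumes T: "T \<subseteq> {1..<q}"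
    and cov: "\<And>g. g \<in> {0..<q} \<Longrightarrow> \<exists>e\<in>M \<union> {0}. \<exists>s\<in>T. g = e * s mod q"
  shows "group_covered q t M t (axis_vecs t T)"
  unfolding group_covered_def
proof (intro conjI ballI)
  show "axis_vecs t T \<subseteq> Zq_vecs q t"
    using T unfolding axis_vecs_def axis_vec_def Zq_vecs_def by auto
next
  fix g assume "g \<in> Zq_vecs q t"
  then have "\<forall>i<t. \<exists>e\<in>M \<union> {0}. \<exists>s\<in>T. g i = e * s mod q"
    using cov unfolding Zq_vecs_def by simp
  then obtain ec sc where es: "\<And>i. i < t \<Longrightarrow> ec i \<in> M \<union> {0} \<and> sc i \<in> T \<and> g i = ec i * sc i mod q"
    by metis
  have "finite T" "0 \<notin> T" using T finite_subset by auto
  then obtain e where "\<And>v. e v \<in> ec ` {..<t} \<union> {0}"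
    and "card {v \<in> axis_vecs t T. e v \<noteq> 0} \<le> t"
    and "\<And>i. i < t \<Longrightarrow> (\<Sum>v\<in>axis_vecs t T. e v * v i) = ec i * sc i"
    using axis_vecs_combination[of T t sc ec] es by blast
  then show "\<exists>e. (\<forall>s\<in>axis_vecs t T. e s \<in> M \<union> {0}) \<and> card {s \<in> axis_vecs t T. e s \<noteq> 0} \<le> t \<and>
          (\<forall>i<t. g i = (\<Sum>s\<in>axis_vecs t T. e s * s i) mod q)"
    using es by (intro exI[of _ e]) fastforce
qed

section \<open>Lattice coverings from syndromes\<close>

lemma card_image_eq_if_same_kernel:
  assumes "\<And>x y. x \<in> A \<Longrightarrow> y \<in> A \<Longrightarrow> f x = f y \<longleftrightarrow> g x = g y"
  shows "card (f ` A) = card (g ` A)"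
proof -
  define h where "h z = f (inv_into A g z)" for z
  have hg: "h (g x) = f x" if "x \<in> A" for x
  proof -
    have "inv_into A g (g x) \<in> A" "g (inv_into A g (g x)) = g x"
      using that by (auto intro: inv_into_into f_inv_into_f)
    then show ?thesis unfolding h_def using assms that by blast
  qed
  then have "f ` A = h ` g ` A" by (auto simp: image_image)
  moreover have "inj_on h (g ` A)"
    by (auto simp: inj_on_def hg assms)
  ultimately show ?thesis by (simp add: card_image)
qed

lemma int_lattice_closed:
  assumes "int_lattice n L" and "u \<in> L" "v \<in> L"
  shows "(\<lambda>i. u i + v i) \<in> L" and "(\<lambda>i. - u i) \<in> L"
  using assms unfolding int_lattice_def by blast+

lemma coset_eq_iff:
  assumes "int_lattice n L"
  shows "(\<lambda>v i. x i + v i) ` L = (\<lambda>v i. y i + v i) ` L \<longleftrightarrow> (\<lambda>i. x i - y i) \<in> L"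
proof
  assume eq: "(\<lambda>v i. x i + v i) ` L = (\<lambda>v i. y i + v i) ` L"
  have "(\<lambda>i. y i + 0) \<in> (\<lambda>v i. y i + v i) ` L"
    using assms unfolding int_lattice_def by (intro imageI) simp
  then obtain v where "v \<in> L" "y = (\<lambda>i. x i + v i)"
    unfolding eq[symmetric] by auto
  then show "(\<lambda>i. x i - y i) \<in> L"
    using int_lattice_closed(2)[OF assms] by simp
next
  assume d: "(\<lambda>i. x i - y i) \<in> L"
  have sub: "(\<lambda>v i. a i + v i) ` L \<subseteq> (\<lambda>v i. b i + v i) ` L" if "(\<lambda>i. a i - b i) \<in> L" for a b
  proof
    fix z assume "z \<in> (\<lambda>v i. a i + v i) ` L"
    then obtain v where "v \<in> L" "z = (\<lambda>i. a i + v i)" by blast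
    moreover have "(\<lambda>i. (a i - b i) + v i) \<in> L"
      using int_lattice_closed(1)[OF assms that \<open>v \<in> L\<close>] .
    ultimately show "z \<in> (\<lambda>v i. b i + v i) ` L"
      by (auto intro!: image_eqI[of _ _ "\<lambda>i. (a i - b i) + v i"])
  qed
  have "(\<lambda>i. y i - x i) \<in> L"
    using int_lattice_closed(2)[OF assms d d] by simp
  then show "(\<lambda>v i. x i + v i) ` L = (\<lambda>v i. y i + v i) ` L"
    using sub d by blast
qed

lemma lattice_vol_eq_card_image:
  assumes "int_lattice n L"
    and "\<And>x y. x \<in> Zn n \<Longrightarrow> y \<in> Zn n \<Longrightarrow> \<phi> x = \<phi> y \<longleftrightarrow> (\<lambda>i. x i - y i) \<in> L"
  shows "lattice_vol n L = card (\<phi> ` Zn n)"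
  unfolding lattice_vol_def
  by (rule card_image_eq_if_same_kernel) (simp add: coset_eq_iff[OF assms(1)] assms(2))

lemma lattice_covering_if_image_eq:
  assumes "int_lattice n L" and "B \<subseteq> Zn n"
    and "\<And>x y. x \<in> Zn n \<Longrightarrow> y \<in> Zn n \<Longrightarrow> \<phi> x = \<phi> y \<longleftrightarrow> (\<lambda>i. x i - y i) \<in> L"
    and "\<phi> ` Zn n \<subseteq> \<phi> ` B"
  shows "lattice_covering n L B"
  unfolding lattice_covering_def
proof (intro conjI equalityI subsetI)
  fix x assume "x \<in> Zn n"
  then obtain b where "b \<in> B" "\<phi> x = \<phi> b" using assms(4) by blast
  then have "(\<lambda>i. x i - b i) \<in> L" using assms(2,3) \<open>x \<in> Zn n\<close> by blast
  then show "x \<in> (\<Union>v\<in>L. (\<lambda>b i. v i + b i) ` B)"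
    using \<open>b \<in> B\<close> by (intro UN_I[of "\<lambda>i. x i - b i"] image_eqI[of _ _ b]) auto
next
  fix x assume "x \<in> (\<Union>v\<in>L. (\<lambda>b i. v i + b i) ` B)"
  then obtain v b where "v \<in> L" "b \<in> B" "x = (\<lambda>i. v i + b i)" by blast
  moreover have "v \<in> Zn n" "b \<in> Zn n"
    using \<open>v \<in> L\<close> \<open>b \<in> B\<close> assms(1,2) unfolding int_lattice_def by auto
  ultimately show "x \<in> Zn n" unfolding Zn_def by simp
qed (rule assms(1))

text \<open>\<open>h j\<close> is the \<open>j\<close>-th column of the parity-check matrix.\<close>

definition syndrome :: "int \<Rightarrow> nat \<Rightarrow> nat \<Rightarrow> (nat \<Rightarrow> nat \<Rightarrow> int) \<Rightarrow> (nat \<Rightarrow> int) \<Rightarrow> nat \<Rightarrow> int" where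
  "syndrome q t n h x = (\<lambda>i. if i < t then (\<Sum>j<n. x j * h j i) mod q else 0)"

definition syndrome_lattice :: "int \<Rightarrow> nat \<Rightarrow> nat \<Rightarrow> (nat \<Rightarrow> nat \<Rightarrow> int) \<Rightarrow> (nat \<Rightarrow> int) set" where
  "syndrome_lattice q t n h = {x \<in> Zn n. syndrome q t n h x = (\<lambda>_. 0)}"

lemma syndrome_eq_0_iff:
  "syndrome q t n h x = (\<lambda>_. 0) \<longleftrightarrow> (\<forall>i<t. q dvd (\<Sum>j<n. x j * h j i))"
  by (auto simp: syndrome_def fun_eq_iff dvd_eq_mod_eq_0)

lemma syndrome_eq_iff:
  "syndrome q t n h x = syndrome q t n h y \<longleftrightarrow> syndrome q t n h (\<lambda>j. x j - y j) = (\<lambda>_. 0)"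
  by (auto simp: syndrome_eq_0_iff syndrome_def fun_eq_iff mod_eq_dvd_iff left_diff_distrib sum_subtractf)

lemma int_lattice_syndrome_lattice: "int_lattice n (syndrome_lattice q t n h)"
  unfolding int_lattice_def syndrome_lattice_def syndrome_eq_0_iff
  by (auto simp: Zn_def distrib_right sum.distrib sum_negf)

lemma syndrome_in_Zq_vecs: "q > 0 \<Longrightarrow> syndrome q t n h x \<in> Zq_vecs q t"
  by (simp add: syndrome_def Zq_vecs_def)

lemma Zq_vecs_subset_syndrome_err_ball:
  assumes h: "bij_betw h {..<n} S" and cov: "group_covered q t M w S"
    and M: "M \<subseteq> {- int km..int kp}"
  shows "Zq_vecs q t \<subseteq> syndrome q t n h ` err_ball n w kp km"
proof
  fix g assume g: "g \<in> Zq_vecs q t"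
  then obtain e where e: "\<forall>s\<in>S. e s \<in> M \<union> {0}" "card {s\<in>S. e s \<noteq> 0} \<le> w"
      "\<forall>i<t. g i = (\<Sum>s\<in>S. e s * s i) mod q"
    using cov unfolding group_covered_def by blast
  define b where "b j = (if j < n then e (h j) else 0)" for j
  have "(\<Sum>j<n. b j * h j i) = (\<Sum>s\<in>S. e s * s i)" for i
    using sum.reindex_bij_betw[OF h, of "\<lambda>s. e s * s i"] by (simp add: b_def)
  then have "syndrome q t n h b = g"
    using g e(3) by (auto simp: syndrome_def Zq_vecs_def fun_eq_iff)
  have "hweight n b = card {s\<in>S. e s \<noteq> 0}"
  proof -
    have "bij_betw h {j. j < n \<and> b j \<noteq> 0} {s\<in>S. e s \<noteq> 0}"
      using h unfolding bij_betw_def inj_on_def b_def by auto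
    then show ?thesis unfolding hweight_def by (rule bij_betw_same_card)
  qed
  moreover have "b j \<in> {- int km..int kp}" for j
    using e(1) M bij_betwE[OF h] unfolding b_def by fastforce
  moreover have "\<forall>j\<ge>n. b j = 0" by (simp add: b_def)
  ultimately have "b \<in> err_ball n w kp km"
    using e(2) unfolding err_ball_def Zn_def by auto
  then show "g \<in> syndrome q t n h ` err_ball n w kp km"
    using \<open>syndrome q t n h b = g\<close> by blast
qed

lemma lattice_covering_from_group_covered:
  assumes q: "q > 0" and S: "finite S" "card S = n"
    and cov: "group_covered q t M w S" and M: "M \<subseteq> {- int km..int kp}"
  shows "\<exists>L. lattice_covering n L (err_ball n w kp km) \<and> lattice_vol n L = card (Zq_vecs q t)"
proof -
  obtain h where h: "bij_betw h {..<n} S"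
    using ex_bij_betw_nat_finite[OF S(1)] unfolding S(2) lessThan_atLeast0 by blast
  define L where "L = syndrome_lattice q t n h"
  have lat: "int_lattice n L"
    unfolding L_def by (rule int_lattice_syndrome_lattice)
  have ker: "syndrome q t n h x = syndrome q t n h y \<longleftrightarrow> (\<lambda>i. x i - y i) \<in> L"
    if "x \<in> Zn n" "y \<in> Zn n" for x y
  proof -
    have "(\<lambda>i. x i - y i) \<in> Zn n" using that by (simp add: Zn_def)
    then show ?thesis
      unfolding syndrome_eq_iff L_def syndrome_lattice_def by blast
  qed
  have B: "err_ball n w kp km \<subseteq> Zn n"
    by (auto simp: err_ball_def)
  have sub: "Zq_vecs q t \<subseteq> syndrome q t n h ` err_ball n w kp km"
    by (rule Zq_vecs_subset_syndrome_err_ball[OF h cov M])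
  also have "\<dots> \<subseteq> syndrome q t n h ` Zn n"
    using B by (rule image_mono)
  finally have img: "syndrome q t n h ` Zn n = Zq_vecs q t"
    using syndrome_in_Zq_vecs[OF q] by blast
  have "lattice_covering n L (err_ball n w kp km)"
  proof (rule lattice_covering_if_image_eq[OF lat B ker])
    show "syndrome q t n h ` Zn n \<subseteq> syndrome q t n h ` err_ball n w kp km"
      unfolding img by (rule sub)
  qed
  moreover have "lattice_vol n L = card (Zq_vecs q t)"
  proof -
    have "lattice_vol n L = card (syndrome q t n h ` Zn n)"
      by (rule lattice_vol_eq_card_image[OF lat ker])
    then show ?thesis unfolding img .
  qed
  ultimately show ?thesis by blast
qed

section \<open>Sizes of the error ball and of the quotient\<close>

definition funcset_zero_outside :: "'a set \<Rightarrow> 'b::zero set \<Rightarrow> ('a \<Rightarrow> 'b) set" where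
  "funcset_zero_outside A V = {x. (\<forall>i\<in>A. x i \<in> V) \<and> (\<forall>i. i \<notin> A \<longrightarrow> x i = 0)}"

lemma bij_betw_restrict_funcset_zero_outside:
  "bij_betw (\<lambda>x. restrict x A) (funcset_zero_outside A V) (PiE A (\<lambda>_. V))"
proof (rule bij_betw_byWitness[where f'="\<lambda>f i. if i \<in> A then f i else 0"])
  show "\<forall>x\<in>funcset_zero_outside A V. (\<lambda>i. if i \<in> A then restrict x A i else 0) = x"
    by (auto simp: funcset_zero_outside_def fun_eq_iff)
  show "\<forall>f\<in>PiE A (\<lambda>_. V). restrict (\<lambda>i. if i \<in> A then f i else 0) A = f"
    by (auto simp: fun_eq_iff PiE_def extensional_def)
  show "(\<lambda>x. restrict x A) ` funcset_zero_outside A V \<subseteq> PiE A (\<lambda>_. V)"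
    by (auto simp: funcset_zero_outside_def)
  show "(\<lambda>f i. if i \<in> A then f i else 0) ` PiE A (\<lambda>_. V) \<subseteq> funcset_zero_outside A V"
    by (auto simp: funcset_zero_outside_def)
qed

lemma finite_funcset_zero_outside:
  assumes "finite A" and "finite V"
  shows "finite (funcset_zero_outside A V)"
  using bij_betw_finite[OF bij_betw_restrict_funcset_zero_outside[of A V]] assms
  by (simp add: finite_PiE)

lemma card_funcset_zero_outside:
  assumes "finite A" and "finite V"
  shows "card (funcset_zero_outside A V) = card V ^ card A"
  using bij_betw_same_card[OF bij_betw_restrict_funcset_zero_outside[of A V]] assms
  by (simp add: card_PiE)

lemma card_Zq_vecs: "card (Zq_vecs q t) = nat q ^ t"
proof -
  have "Zq_vecs q t = funcset_zero_outside {..<t} {0..<q}"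
    unfolding Zq_vecs_def funcset_zero_outside_def by (simp add: not_less Ball_def)
  then show ?thesis by (simp add: card_funcset_zero_outside)
qed

lemma err_ball_eq_UN_supports:
  "err_ball n w kp km =
     (\<Union>A\<in>{A. A \<subseteq> {..<n} \<and> card A \<le> w}. funcset_zero_outside A ({- int km..int kp} - {0}))"
  (is "_ = (\<Union>A\<in>?I. ?P A)")
proof (intro equalityI subsetI)
  fix x assume "x \<in> err_ball n w kp km"
  then have x: "\<forall>i\<ge>n. x i = 0" "\<forall>i<n. - int km \<le> x i \<and> x i \<le> int kp"
    "card {i. i < n \<and> x i \<noteq> 0} \<le> w"
    unfolding err_ball_def Zn_def hweight_def by simp_all
  define A where "A = {i. i < n \<and> x i \<noteq> 0}"
  have "x \<in> ?P A"
    unfolding funcset_zero_outside_def A_def using x by (auto simp: not_less)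
  moreover have "A \<in> ?I"
    unfolding A_def using x(3) by auto
  ultimately show "x \<in> (\<Union>A\<in>?I. ?P A)" by blast
next
  fix x assume "x \<in> (\<Union>A\<in>?I. ?P A)"
  then obtain A where A: "A \<subseteq> {..<n}" "card A \<le> w" "x \<in> ?P A"
    by blast
  have "{i. i < n \<and> x i \<noteq> 0} = A" using A(1,3) unfolding funcset_zero_outside_def by auto
  moreover have "x \<in> Zn n" using A(1,3) unfolding funcset_zero_outside_def Zn_def by auto
  moreover have "- int km \<le> x i \<and> x i \<le> int kp" for i
    using A(3) unfolding funcset_zero_outside_def by (cases "i \<in> A") auto
  ultimately show "x \<in> err_ball n w kp km"
    using A(2) unfolding err_ball_def hweight_def by simp
qed

lemma card_err_ball: "card (err_ball n w kp km) = (\<Sum>i\<le>w. (n choose i) * (kp + km) ^ i)"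
proof -
  define V where "V = {- int km..int kp} - {0}"
  define I where "I = {A. A \<subseteq> {..<n} \<and> card A \<le> w}"
  have "finite V" "card V = kp + km"
    unfolding V_def by (simp_all add: card_Diff_singleton)
  have finite_I: "finite I"
    unfolding I_def by (rule finite_subset[of _ "Pow {..<n}"]) auto
  have finite_A: "finite A" if "A \<in> I" for A
    using that unfolding I_def by (auto dest: finite_subset)
  have "card (err_ball n w kp km) = (\<Sum>A\<in>I. card (funcset_zero_outside A V))"
    unfolding err_ball_eq_UN_supports V_def[symmetric] I_def[symmetric]
  proof (rule card_UN_disjoint[OF finite_I])
    show "\<forall>A\<in>I. finite (funcset_zero_outside A V)"
      using finite_A finite_funcset_zero_outside \<open>finite V\<close> by blast
    have "{i. x i \<noteq> 0} = A" if "x \<in> funcset_zero_outside A V" for x A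
      using that unfolding funcset_zero_outside_def V_def by auto
    then show "\<forall>A\<in>I. \<forall>B\<in>I. A \<noteq> B \<longrightarrow> funcset_zero_outside A V \<inter> funcset_zero_outside B V = {}"
      by blast
  qed
  also have "\<dots> = (\<Sum>A\<in>I. (kp + km) ^ card A)"
    using finite_A \<open>finite V\<close> \<open>card V = kp + km\<close> by (simp add: card_funcset_zero_outside)
  also have "\<dots> = (\<Sum>i\<le>w. \<Sum>A\<in>{A \<in> I. card A = i}. (kp + km) ^ card A)"
    using finite_I by (intro sum.group[symmetric]) (auto simp: I_def)
  also have "\<dots> = (\<Sum>i\<le>w. (n choose i) * (kp + km) ^ i)"
  proof (rule sum.cong)
    fix i assume "i \<in> {..w}"
    then have "{A \<in> I. card A = i} = {A. A \<subseteq> {..<n} \<and> card A = i}" unfolding I_def by auto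
    then show "(\<Sum>A\<in>{A \<in> I. card A = i}. (kp + km) ^ card A) = (n choose i) * (kp + km) ^ i"
      using n_subsets[of "{..<n}" i] by simp
  qed simp
  finally show ?thesis .
qed

section \<open>Asymptotics of the density\<close>

lemma tendsto_binomial_term:
  fixes c k :: real
  assumes c: "c > 0" and "i \<le> t"
  shows "(\<lambda>N::nat. real (N choose i) * k ^ i / (real N * c + 1) ^ t)
           \<longlonglongrightarrow> (if i = t then k ^ t / (fact t * c ^ t) else 0)"
proof -
  define d where "d N = real N * c + 1" for N :: nat
  have "d N > 0" for N
    using c unfolding d_def by (simp add: add_nonneg_pos)
  then have eq: "real (N choose i) * k ^ i / (real N * c + 1) ^ t =
      k ^ i / fact i * (\<Prod>j<i. (real N - real j) / d N) * (1 / d N) ^ (t - i)" for N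
    unfolding d_def[symmetric] using \<open>i \<le> t\<close>
    by (simp add: binomial_gbinomial gbinomial_prod_rev atLeast0LessThan prod_dividef
        power_one_over field_simps flip: power_add)
  have "(\<lambda>N. (real N - real j) / d N) \<longlonglongrightarrow> inverse c" for j
    unfolding d_def using c by real_asymp
  moreover have "(\<lambda>N. 1 / d N) \<longlonglongrightarrow> 0"
    unfolding d_def using c by real_asymp
  ultimately have "(\<lambda>N. k ^ i / fact i * (\<Prod>j<i. (real N - real j) / d N) * (1 / d N) ^ (t - i))
      \<longlonglongrightarrow> k ^ i / fact i * (\<Prod>j<i. inverse c) * 0 ^ (t - i)"
    by (intro tendsto_intros)
  moreover have "k ^ i / fact i * (\<Prod>j<i. inverse c) * (0::real) ^ (t - i) =
      (if i = t then k ^ t / (fact t * c ^ t) else 0)"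
    using \<open>i \<le> t\<close> by (simp add: power_inverse divide_inverse)
  ultimately show ?thesis unfolding eq by simp
qed

lemma tendsto_binomial_sum_ratio:
  fixes c k :: real
  assumes "c > 0"
  shows "(\<lambda>N::nat. (\<Sum>i\<le>t. real (N choose i) * k ^ i) / (real N * c + 1) ^ t)
           \<longlonglongrightarrow> k ^ t / (fact t * c ^ t)"
proof -
  have "(\<lambda>N::nat. \<Sum>i\<le>t. real (N choose i) * k ^ i / (real N * c + 1) ^ t)
      \<longlonglongrightarrow> (\<Sum>i\<le>t. if i = t then k ^ t / (fact t * c ^ t) else 0)"
    using assms by (intro tendsto_sum tendsto_binomial_term) simp_all
  then show ?thesis by (simp add: sum_divide_distrib)
qed

lemma power_diff_1_eq_nat:
  fixes p :: nat
  assumes "p \<ge> 1"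
  shows "p ^ m - 1 = (p - 1) * (\<Sum>i<m. p ^ i)"
proof -
  have "int (p ^ m - 1) = int p ^ m - 1"
    using assms by (simp add: of_nat_diff)
  also have "\<dots> = (int p - 1) * (\<Sum>i<m. int p ^ i)"
    by (rule power_diff_1_eq)
  also have "\<dots> = int ((p - 1) * (\<Sum>i<m. p ^ i))"
    using assms by (simp add: of_nat_diff)
  finally show ?thesis by (simp only: of_nat_eq_iff)
qed

lemma filterlim_geometric_count:
  fixes p t :: nat
  assumes "p \<ge> 1" and "t > 0"
  shows "filterlim (\<lambda>m. t * (\<Sum>i<m. p ^ i)) at_top sequentially"
proof (rule filterlim_at_top_mono[OF filterlim_ident], intro always_eventually allI)
  fix m
  have "m \<le> (\<Sum>i<m. p ^ i)"
    using sum_mono[of "{..<m}" "\<lambda>_. 1" "\<lambda>i. p ^ i"] assms(1) by simp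
  also have "\<dots> \<le> t * (\<Sum>i<m. p ^ i)"
    using assms(2) by simp
  finally show "m \<le> t * (\<Sum>i<m. p ^ i)" .
qed

lemma psi_bar_prime_le:
  assumes "x \<ge> 2"
  shows "prime (psi_bar x) \<and> psi_bar x \<le> x"
  unfolding psi_bar_def
  by (rule GreatestI_nat[where k=2 and b=x]) (use assms in auto)

lemma group_covered_prime_power:
  fixes p kp km t m :: nat
  assumes p: "prime p" "p \<le> kp + km + 1" and "m > 0"
  shows "\<exists>S. card S = t * (\<Sum>i<m. p ^ i) \<and>
           group_covered (int (p ^ m)) t (int_range_star (- int km) (int kp)) t S"
proof -
  define M where "M = int_range_star (- int km) (int kp)"
  define T where "T = principal_reps (int p) m"
  have p2: "int p \<ge> 2" using p(1) prime_ge_2_nat by fastforce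
  have T: "T \<subseteq> {1..<int (p ^ m)}"
    unfolding T_def using principal_reps_subset[OF p2] by simp
  have "card T = (\<Sum>i<m. p ^ i)"
    unfolding T_def using card_principal_reps[OF p2] by simp
  moreover have "(\<Sum>i<m. p ^ i) > 0"
    using \<open>m > 0\<close> p2 by (intro sum_pos2[of _ 0]) auto
  ultimately have "card T > 0" by simp
  then have "T \<noteq> {}" by force
  have "\<exists>e\<in>M \<union> {0}. \<exists>s\<in>T. g = e * s mod int (p ^ m)" if g: "g \<in> {0..<int (p ^ m)}" for g
  proof (cases "g = 0")
    case True
    then show ?thesis using \<open>T \<noteq> {}\<close> by auto
  next
    case False
    have "\<And>r. \<not> int p dvd r \<Longrightarrow> \<exists>e\<in>M. [e = r] (mod int p)"
      unfolding M_def using p by (intro int_range_star_represents_units) auto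
    then show ?thesis
      using nonzero_residue_eq_mult_principal_rep[of "int p" M g m] p(1) g False
      unfolding T_def by auto
  qed
  then have "group_covered (int (p ^ m)) t M t (axis_vecs t T)"
    by (rule group_covered_axis_vecs[OF T])
  moreover have "card (axis_vecs t T) = t * (\<Sum>i<m. p ^ i)"
    using T \<open>card T = (\<Sum>i<m. p ^ i)\<close> finite_subset[OF T]
    by (subst card_axis_vecs) auto
  ultimately show ?thesis unfolding M_def by blast
qed

lemma lattice_covering_prime_power:
  fixes p kp km t m :: nat
  assumes p: "prime p" "p \<le> kp + km + 1" and "m > 0" "t > 0"
  defines "N \<equiv> t * (\<Sum>i<m. p ^ i)"
  shows "\<exists>L. lattice_covering N L (err_ball N t kp km) \<and>
           covering_density N L (err_ball N t kp km) =
             (\<Sum>i\<le>t. real (N choose i) * real (kp + km) ^ i) / (real N * real (p - 1) / real t + 1) ^ t"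
proof -
  have "p \<ge> 2" using p(1) prime_ge_2_nat by blast
  obtain S where S: "card S = N" "group_covered (int (p ^ m)) t (int_range_star (- int km) (int kp)) t S"
    using group_covered_prime_power[OF p \<open>m > 0\<close>] unfolding N_def by blast
  have "N > 0"
    unfolding N_def using \<open>m > 0\<close> \<open>t > 0\<close> \<open>p \<ge> 2\<close> by (simp add: sum_pos2[of _ 0])
  then have "finite S" using S(1) card_ge_0_finite by blast
  moreover have "int_range_star (- int km) (int kp) \<subseteq> {- int km..int kp}"
    by (auto simp: int_range_star_def)
  ultimately obtain L where L: "lattice_covering N L (err_ball N t kp km)"
      "lattice_vol N L = card (Zq_vecs (int (p ^ m)) t)"
    using lattice_covering_from_group_covered[of "int (p ^ m)" S N t _ t km kp] S \<open>p \<ge> 2\<close> by auto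
  have "N * (p - 1) = t * (p ^ m - 1)"
    unfolding N_def using power_diff_1_eq_nat[of p m] \<open>p \<ge> 2\<close> by simp
  then have "real N * real (p - 1) = real (t * (p ^ m - 1))"
    by (simp only: of_nat_mult[symmetric])
  also have "\<dots> = real t * (real p ^ m - 1)"
    using \<open>p \<ge> 2\<close> by (simp add: of_nat_diff)
  finally have "real N * real (p - 1) = real t * (real p ^ m - 1)" .
  then have "real N * real (p - 1) / real t + 1 = real p ^ m"
    using \<open>t > 0\<close> by simp
  then have "covering_density N L (err_ball N t kp km) =
      (\<Sum>i\<le>t. real (N choose i) * real (kp + km) ^ i) / (real N * real (p - 1) / real t + 1) ^ t"
    unfolding covering_density_def card_err_ball L(2) card_Zq_vecs by (simp add: power_mult)
  then show ?thesis using L(1) by blast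
qed

theorem corollary11:
  fixes kp km t :: nat
  assumes "km \<le> kp" and "kp + km \<ge> 1" and "t > 0"
  defines "M \<equiv> int_range_star (- int km) (int kp)"
      and "p \<equiv> psi_bar (kp + km + 1)"
  defines "n \<equiv> (\<lambda>m::nat. t * (p ^ m - 1) div (p - 1))"
      and "\<delta> \<equiv> (\<lambda>m::nat. let N = t * (p ^ m - 1) div (p - 1) in
                    (\<Sum>i\<le>t. real (N choose i) * real (kp + km) ^ i)
                       / (real N * real (p - 1) / real t + 1) ^ t)"
  shows "(\<forall>m>0. (\<exists>S. card S = n m \<and> group_covered (int (p ^ m)) t M t S) \<and>
            (\<exists>L. lattice_covering (n m) L (err_ball (n m) t kp km) \<and>
                 covering_density (n m) L (err_ball (n m) t kp km) = \<delta> m))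
       \<and> (\<delta> \<longlonglongrightarrow> (real t * real (kp + km)) ^ t / (fact t * real (p - 1) ^ t))"
proof -
  have p: "prime p" "p \<le> kp + km + 1"
    using psi_bar_prime_le[of "kp + km + 1"] assms(2) unfolding p_def by auto
  then have "p \<ge> 2" by (simp add: prime_ge_2_nat)
  have n_eq: "n m = t * (\<Sum>i<m. p ^ i)" for m
    using power_diff_1_eq_nat[of p m] \<open>p \<ge> 2\<close> unfolding n_def by (simp add: mult.left_commute)
  define c where "c = real (p - 1) / real t"
  have \<delta>_eq: "\<delta> = (\<lambda>m. (\<Sum>i\<le>t. real (n m choose i) * real (kp + km) ^ i) / (real (n m) * c + 1) ^ t)"
    unfolding \<delta>_def n_def c_def Let_def by (simp add: times_divide_eq_right)
  have "filterlim n at_top sequentially"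
    unfolding n_eq using \<open>p \<ge> 2\<close> \<open>t > 0\<close> by (intro filterlim_geometric_count) auto
  then have "\<delta> \<longlonglongrightarrow> real (kp + km) ^ t / (fact t * c ^ t)"
    unfolding \<delta>_eq using \<open>t > 0\<close> \<open>p \<ge> 2\<close> c_def
    by (intro filterlim_compose[OF tendsto_binomial_sum_ratio]) auto
  moreover have "real (kp + km) ^ t / (fact t * c ^ t) = (real t * real (kp + km)) ^ t / (fact t * real (p - 1) ^ t)"
    unfolding c_def power_divide power_mult_distrib using \<open>t > 0\<close> \<open>p \<ge> 2\<close> by simp
  moreover have "\<delta> m = (\<Sum>i\<le>t. real (n m choose i) * real (kp + km) ^ i) / (real (n m) * real (p - 1) / real t + 1) ^ t" for m
    unfolding \<delta>_def n_def Let_def ..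
  ultimately show ?thesis
    using group_covered_prime_power[OF p] lattice_covering_prime_power[OF p _ \<open>t > 0\<close>]
    unfolding n_eq M_def by auto
qed

end
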